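(* Let $\mathcal A=\{a_1,\dots,a_n\}\subset\mathbb Z^d$ with $n\ge d+2$ and $d$-dimensional convex hull, and let $\Delta=\{a_{i_1},\dots,a_{i_{d+1}}\}$ be a $d$-simplex of $\mathcal A$ with index set $I=\{i_1<\dots<i_{d+1}\}$. Then the cone $\mathcal C_\Delta$ of all height vectors $h\in\mathbb R^n$ inducing a regular subdivision of $\mathcal A$ that contains $\Delta$ (as a cell) is \[ \mathcal C_\Delta=\{h\in\mathbb R^n:\ \langle d_I\cdot m^I_i,h\rangle=d_I\cdot d_{I\cup\{i\}}(h)>0\ \text{ for all } i\notin I\}, \] and the $n-(d+1)$ vectors $d_I\cdot m^I_i$, $i\notin I$, form a basis of the kernel of the matrix $A$.
   Context: Let $A\in\mathbb Z^{(d+1)\times n}$ be the matrix whose $j$-th column is $(1,a_j)^t$, and for $h\in\mathbb R^n$ let $A_h\in\mathbb R^{(d+2)\times n}$ be $A$ with the extra last row $(h_1,\dots,h_n)$. A $d$-simplex of $\mathcal A$ is a subset of $d+1$ affinely independent points of $\mathcal A$. $d_I$ is the determinant of the $(d+1)\times(d+1)$ submatrix of $A$ with columns indexed by $I$ (nonzero). For $i\notin I$, $d_{I\cup\{i\}}(h)$ is the determinant of the $(d+2)\times(d+2)$ submatrix of $A_h$ with columns indexed by $I\cup\{i\}$, multiplied by the sign of the permutation sending the increasingly ordered $I\cup\{i\}$ to $(i_1,\dots,i_{d+1},i)$; it is a linear function of $h$, and $m^I_i\in\mathbb R^n$ denotes the vector with $d_{I\cup\{i\}}(h)=\langle m^I_i,h\rangle$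 for all $h$. Regular subdivisions: for $h\in\mathbb R^n$, lift $a_j$ to $(a_j,h_j)\in\mathbb R^{d+1}$; the lower faces of the convex hull of the lifted points are the faces having an inner normal with positive last coordinate. For each lower face $F$, the set $\{a_j:(a_j,h_j)\in F\}$ is a cell; the collection of cells is the regular subdivision $\Gamma_h$ induced by $h$. "$\Gamma_h$ contains $\Delta$" means $\Delta$ is a cell of $\Gamma_h$. *)

theory Defs
  imports "HOL-Analysis.Analysis" "HOL-Combinatorics.Permutations"
begin

definition ndet :: "nat \<Rightarrow> (nat \<Rightarrow> nat \<Rightarrow> real) \<Rightarrow> real" where
  "ndet k M = (\<Sum>p | p permutes {..<k}. of_int (sign p) * (\<Prod>r<k. M r (p r)))"

definition crd :: "nat \<Rightarrow> 'd::{finite,linorder}" where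
  "crd k = sorted_list_of_set (UNIV :: 'd set) ! k"

definition Amat :: "(nat \<Rightarrow> real^'d::{finite,linorder}) \<Rightarrow> nat \<Rightarrow> nat \<Rightarrow> real" where
  "Amat a r j = (if r = 0 then 1 else a j $ crd (r - 1))"

definition Ahmat :: "(nat \<Rightarrow> real^'d::{finite,linorder}) \<Rightarrow> (nat \<Rightarrow> real) \<Rightarrow> nat \<Rightarrow> nat \<Rightarrow> real" where
  "Ahmat a h r j = (if r \<le> CARD('d) then Amat a r j else h j)"

definition dI :: "(nat \<Rightarrow> real^'d::{finite,linorder}) \<Rightarrow> nat set \<Rightarrow> real" where
  "dI a I = ndet (CARD('d) + 1) (\<lambda>r c. Amat a r (sorted_list_of_set I ! c))"

definition dIi :: "(nat \<Rightarrow> real^'d::{finite,linorder}) \<Rightarrow> nat set \<Rightarrow> nat \<Rightarrow> (nat \<Rightarrow> real) \<Rightarrow> real" where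
  "dIi a I i h = ndet (CARD('d) + 2) (\<lambda>r c. Ahmat a h r ((sorted_list_of_set I @ [i]) ! c))"

(* R^n, realised as functions nat => real vanishing from n on *)
definition Rn :: "nat \<Rightarrow> (nat \<Rightarrow> real) set" where
  "Rn n = {h. \<forall>j\<ge>n. h j = 0}"

definition mIi :: "nat \<Rightarrow> (nat \<Rightarrow> real^'d::{finite,linorder}) \<Rightarrow> nat set \<Rightarrow> nat \<Rightarrow> (nat \<Rightarrow> real)" where
  "mIi n a I i = (THE m. m \<in> Rn n \<and> (\<forall>h. dIi a I i h = (\<Sum>j<n. m j * h j)))"

definition lifted :: "nat \<Rightarrow> (nat \<Rightarrow> real^'d) \<Rightarrow> (nat \<Rightarrow> real) \<Rightarrow> ((real^'d) \<times> real) set" where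
  "lifted n a h = {(a j, h j) | j. j < n}"

definition lower_face :: "((real^'d) \<times> real) set \<Rightarrow> ((real^'d) \<times> real) set \<Rightarrow> bool" where
  "lower_face P F \<longleftrightarrow> F face_of P \<and>
     (\<exists>w t. t > 0 \<and> F = {p \<in> P. \<forall>q \<in> P. inner (w, t) p \<le> inner (w, t) q})"

definition regular_subdivision :: "nat \<Rightarrow> (nat \<Rightarrow> real^'d) \<Rightarrow> (nat \<Rightarrow> real) \<Rightarrow> (real^'d) set set" where
  "regular_subdivision n a h =
     {{a j | j. j < n \<and> (a j, h j) \<in> F} | F. lower_face (convex hull (lifted n a h)) F}"

end

theory Submission
  imports Defs "Jordan_Normal_Form.Determinant"
begin

(* Laplace expansion along the last row shows that h \<mapsto> d_{I \<union> {i}}(h) is a linear form m^I_i.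
   It vanishes on the rows of A (a determinant with two equal rows), and off I its only nonzero
   coordinate is the i-th one, equal to d_I. Hence if h agrees on the simplex with an affine
   function g, then d_{I \<union> {i}}(h) = d_I (h_i - g(a_i)).
   On the other hand, the simplex is a cell of \<Gamma>_h iff some affine g agrees with h on it and lies
   strictly below h at all other points; as d_I \<noteq> 0 there is exactly one affine g agreeing with h
   on the simplex, so the cell condition reads d_I d_{I \<union> {i}}(h) = d_I^2 (h_i - g(a_i)) > 0.
   The support property also makes the vectors d_I m^I_i linearly independent, and subtracting
   the right combination of them from a vector of ker A leaves one supported on I, which is zero
   because the columns of A indexed by I are independent. *)

lemma ndet_eq_det: "ndet k M = Determinant.det (Matrix.mat k k (\<lambda>(r, c). M r c))"
  unfolding ndet_def Determinant.det_def
  by (auto intro!: sum.cong prod.cong simp: lessThan_atLeast0 permutes_in_image)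

lemma bij_betw_nth_sorted_list_of_set:
  "finite I \<Longrightarrow> bij_betw ((!) (sorted_list_of_set I)) {..<card I} I"
  by (rule bij_betw_nth) simp_all

lemma bij_betw_crd: "bij_betw (crd :: nat \<Rightarrow> 'd::{finite,linorder}) {..<CARD('d)} UNIV"
  unfolding crd_def[abs_def] using bij_betw_nth_sorted_list_of_set[of "UNIV :: 'd set"] by simp

lemma inner_eq_sum_crd:
  "inner x y = (\<Sum>r<CARD('d). x $ crd r * y $ crd r)" for x y :: "real^'d::{finite,linorder}"
  unfolding inner_vec_def inner_real_def
  using sum.reindex_bij_betw[OF bij_betw_crd, of "\<lambda>k. x $ k * y $ k"] by simp

definition affine_coeffs :: "real \<Rightarrow> real^'d::{finite,linorder} \<Rightarrow> nat \<Rightarrow> real" where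
  "affine_coeffs u W r = (if r = 0 then u else W $ crd (r - 1))"

lemma sum_Amat_affine_coeffs:
  "(\<Sum>r\<le>CARD('d). Amat a r j * affine_coeffs u W r) = u + inner W (a j)"
  for a :: "nat \<Rightarrow> real^'d::{finite,linorder}"
  unfolding sum.atMost_shift by (simp add: Amat_def affine_coeffs_def inner_eq_sum_crd mult.commute)

lemma ex_affine_coeffs:
  "\<exists>u W. \<forall>r\<le>CARD('d). affine_coeffs u (W :: real^'d::{finite,linorder}) r = c r"
proof (intro exI allI impI)
  fix r assume r: "r \<le> CARD('d)"
  let ?W = "\<chi> k :: 'd. c (Suc (the_inv_into {..<CARD('d)} crd k))"
  show "affine_coeffs (c 0) ?W r = c r"
  proof (cases r)
    case (Suc s)
    then have "the_inv_into {..<CARD('d)} crd (crd s :: 'd) = s"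
      using bij_betw_crd[where 'd = 'd] r by (simp add: bij_betw_def the_inv_into_f_f)
    with Suc show ?thesis by (simp add: affine_coeffs_def)
  qed (simp add: affine_coeffs_def)
qed

lemma sum_kernel_mult_affine:
  fixes a :: "nat \<Rightarrow> real^'d::{finite,linorder}"
  assumes "\<forall>r\<le>CARD('d). (\<Sum>j<n. Amat a r j * x j) = 0"
  shows "(\<Sum>j<n. x j * (u + inner W (a j))) = 0"
proof -
  have "(\<Sum>j<n. x j * (u + inner W (a j)))
      = (\<Sum>r\<le>CARD('d). affine_coeffs u W r * (\<Sum>j<n. Amat a r j * x j))"
    by (simp add: sum_Amat_affine_coeffs[symmetric] sum_distrib_left sum.swap[of _ "{..<n}"] mult_ac)
  also have "\<dots> = 0" using assms by simp
  finally show ?thesis .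
qed

definition simplex_mat :: "(nat \<Rightarrow> real^'d::{finite,linorder}) \<Rightarrow> nat set \<Rightarrow> real Matrix.mat" where
  "simplex_mat a I =
     Matrix.mat (CARD('d) + 1) (CARD('d) + 1) (\<lambda>(r, c). Amat a r (sorted_list_of_set I ! c))"

definition lifted_simplex_mat ::
    "(nat \<Rightarrow> real^'d::{finite,linorder}) \<Rightarrow> nat set \<Rightarrow> nat \<Rightarrow> (nat \<Rightarrow> real)
      \<Rightarrow> real Matrix.mat" where
  "lifted_simplex_mat a I i h =
     Matrix.mat (CARD('d) + 2) (CARD('d) + 2)
       (\<lambda>(r, c). Ahmat a h r ((sorted_list_of_set I @ [i]) ! c))"

lemma simplex_mat_carrier:
  "simplex_mat a I \<in> carrier_mat (CARD('d) + 1) (CARD('d) + 1)"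
  for a :: "nat \<Rightarrow> real^'d::{finite,linorder}"
  by (simp add: simplex_mat_def)

lemma lifted_simplex_mat_carrier:
  "lifted_simplex_mat a I i h \<in> carrier_mat (CARD('d) + 2) (CARD('d) + 2)"
  for a :: "nat \<Rightarrow> real^'d::{finite,linorder}"
  by (simp add: lifted_simplex_mat_def)

lemma dI_eq_det: "dI a I = Determinant.det (simplex_mat a I)"
  unfolding dI_def simplex_mat_def ndet_eq_det ..

lemma dIi_eq_det: "dIi a I i h = Determinant.det (lifted_simplex_mat a I i h)"
  unfolding dIi_def lifted_simplex_mat_def ndet_eq_det ..

lemma simplex_mat_mult_vec:
  fixes a :: "nat \<Rightarrow> real^'d::{finite,linorder}"
  assumes "finite I" "card I = CARD('d) + 1" "r \<le> CARD('d)"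
  shows "(simplex_mat a I *\<^sub>v Matrix.vec (CARD('d) + 1) (\<lambda>c. y (sorted_list_of_set I ! c))) $ r
           = (\<Sum>j\<in>I. Amat a r j * y j)"
proof -
  have "(simplex_mat a I *\<^sub>v Matrix.vec (CARD('d) + 1) (\<lambda>c. y (sorted_list_of_set I ! c))) $ r
      = (\<Sum>c<card I. Amat a r (sorted_list_of_set I ! c) * y (sorted_list_of_set I ! c))"
    using assms by (simp add: simplex_mat_def scalar_prod_def lessThan_atLeast0)
  also have "\<dots> = (\<Sum>j\<in>I. Amat a r j * y j)"
    by (rule sum.reindex_bij_betw[OF bij_betw_nth_sorted_list_of_set[OF assms(1)]])
  finally show ?thesis .
qed

lemma simplex_columns_independent:
  fixes a :: "nat \<Rightarrow> real^'d::{finite,linorder}"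
  assumes "dI a I \<noteq> 0" "finite I" "card I = CARD('d) + 1"
    and "\<forall>r\<le>CARD('d). (\<Sum>j\<in>I. Amat a r j * y j) = 0" and "j \<in> I"
  shows "y j = 0"
proof -
  let ?v = "Matrix.vec (CARD('d) + 1) (\<lambda>c. y (sorted_list_of_set I ! c))"
  have "simplex_mat a I *\<^sub>v ?v = 0\<^sub>v (CARD('d) + 1)"
  proof (rule eq_vecI)
    fix r assume "r < dim_vec (0\<^sub>v (CARD('d) + 1) :: real Matrix.vec)"
    then show "(simplex_mat a I *\<^sub>v ?v) $ r = 0\<^sub>v (CARD('d) + 1) $ r"
      using simplex_mat_mult_vec[OF assms(2,3), of r a y] assms(4) by simp
  qed (simp add: simplex_mat_def)
  then have "?v = 0\<^sub>v (CARD('d) + 1)"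
    using det_0_iff_vec_prod_zero[OF simplex_mat_carrier[of a I]] assms(1) vec_carrier
    by (metis dI_eq_det)
  moreover obtain c where "c < card I" "sorted_list_of_set I ! c = j"
    using bij_betw_nth_sorted_list_of_set[OF assms(2)] assms(5)
    by (metis bij_betw_iff_bijections lessThan_iff)
  ultimately show ?thesis
    using assms(3) by (metis index_vec index_zero_vec(1))
qed

lemma simplex_columns_dependent:
  fixes a :: "nat \<Rightarrow> real^'d::{finite,linorder}"
  assumes "dI a I = 0" "finite I" "card I = CARD('d) + 1"
  obtains y where "\<exists>j\<in>I. y j \<noteq> 0" "\<forall>r\<le>CARD('d). (\<Sum>j\<in>I. Amat a r j * y j) = 0"
proof -
  let ?L = "sorted_list_of_set I"
  obtain v where v: "v \<in> carrier_vec (CARD('d) + 1)" "v \<noteq> 0\<^sub>v (CARD('d) + 1)"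
      "simplex_mat a I *\<^sub>v v = 0\<^sub>v (CARD('d) + 1)"
    using det_0_iff_vec_prod_zero[OF simplex_mat_carrier[of a I]] assms(1) by (auto simp: dI_eq_det)
  define y where "y j = v $ the_inv_into {..<card I} ((!) ?L) j" for j
  have y: "y (?L ! c) = v $ c" if "c < card I" for c
    using bij_betw_nth_sorted_list_of_set[OF assms(2)] that
    by (simp add: y_def bij_betw_def the_inv_into_f_f)
  have v_eq: "v = Matrix.vec (CARD('d) + 1) (\<lambda>c. y (?L ! c))"
    using v(1) assms(3) y by auto
  show thesis
  proof
    obtain c where "c < CARD('d) + 1" "v $ c \<noteq> 0"
      using v(1,2) by (metis carrier_vecD eq_vecI index_zero_vec(1) index_zero_vec(2))
    then show "\<exists>j\<in>I. y j \<noteq> 0"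
      using y assms(2,3) by (metis bij_betwE bij_betw_nth_sorted_list_of_set lessThan_iff)
    show "\<forall>r\<le>CARD('d). (\<Sum>j\<in>I. Amat a r j * y j) = 0"
      using simplex_mat_mult_vec[OF assms(2,3)] v(3) v_eq
      by (metis index_zero_vec(1) le_imp_less_Suc Suc_eq_plus1)
  qed
qed

lemma dI_nonzero:
  fixes a :: "nat \<Rightarrow> real^'d::{finite,linorder}"
  assumes "finite I" "card I = CARD('d) + 1" "inj_on a I" "\<not> affine_dependent (a ` I)"
  shows "dI a I \<noteq> 0"
proof
  assume "dI a I = 0"
  then obtain y where y: "\<exists>j\<in>I. y j \<noteq> 0" "\<forall>r\<le>CARD('d). (\<Sum>j\<in>I. Amat a r j * y j) = 0"
    using simplex_columns_dependent assms(1,2) by blast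
  define U where "U = y \<circ> the_inv_into I a"
  have sum_U: "(\<Sum>x\<in>a ` I. f (U x) x) = (\<Sum>j\<in>I. f (y j) (a j))"
    for f :: "real \<Rightarrow> _ \<Rightarrow> 'b::comm_monoid_add"
    using assms(3) by (simp add: sum.reindex U_def the_inv_into_f_f)
  have "sum U (a ` I) = 0"
    using sum_U[of "\<lambda>u x. u"] y(2)[rule_format, of 0] by (simp add: Amat_def)
  moreover have "(\<Sum>x\<in>a ` I. U x *\<^sub>R x) = 0"
  proof (rule Finite_Cartesian_Product.vec_eq_iff[THEN iffD2], rule allI)
    fix k :: 'd
    obtain r where "r < CARD('d)" "crd r = k"
      using bij_betw_crd[where 'd = 'd] by (metis UNIV_I bij_betw_iff_bijections lessThan_iff)
    then show "(\<Sum>x\<in>a ` I. U x *\<^sub>R x) $ k = 0 $ k"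
      using y(2)[rule_format, of "Suc r"] sum_U[of "\<lambda>u x. u *\<^sub>R x"]
      by (simp add: sum_component Amat_def mult.commute)
  qed
  moreover have "\<exists>x\<in>a ` I. U x \<noteq> 0"
    using y(1) assms(3) by (auto simp: U_def the_inv_into_f_f)
  ultimately have "affine_dependent (a ` I)"
    unfolding affine_dependent_explicit using assms(1) by blast
  with assms(4) show False by contradiction
qed

lemma simplex_affine_interpolation:
  fixes a :: "nat \<Rightarrow> real^'d::{finite,linorder}"
  assumes "dI a I \<noteq> 0" "finite I" "card I = CARD('d) + 1"
  obtains u W where "\<forall>j\<in>I. h j = u + inner W (a j)"
proof -
  let ?k = "CARD('d) + 1"
  let ?L = "sorted_list_of_set I"
  let ?M = "transpose_mat (simplex_mat a I)"
  let ?b = "Matrix.vec ?k (\<lambda>c. h (?L ! c))"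
  have M: "?M \<in> carrier_mat ?k ?k" by (simp add: simplex_mat_def)
  have "Determinant.det ?M \<noteq> 0"
    using assms(1) by (simp add: det_transpose[OF simplex_mat_carrier] dI_eq_det)
  then have "?M \<in> Units (ring_mat TYPE(real) ?k ())"
    by (rule det_non_zero_imp_unit[OF M])
  then obtain B where B: "B \<in> carrier_mat ?k ?k" "?M * B = 1\<^sub>m ?k"
    by (auto simp: Units_def ring_mat_def)
  define x where "x r = (B *\<^sub>v ?b) $ r" for r
  have "?M *\<^sub>v (B *\<^sub>v ?b) = (?M * B) *\<^sub>v ?b"
    by (rule assoc_mult_mat_vec[symmetric, OF M B(1)]) simp
  also have "\<dots> = ?b"
    using B(2) by simp
  finally have Mx: "?M *\<^sub>v (B *\<^sub>v ?b) = ?b" .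
  have solves: "(\<Sum>r\<le>CARD('d). Amat a r (?L ! c) * x r) = h (?L ! c)" if "c < ?k" for c
  proof -
    have "(?M *\<^sub>v (B *\<^sub>v ?b)) $ c = h (?L ! c)"
      using Mx that by simp
    then show ?thesis
      using that B(1)
      by (simp add: x_def simplex_mat_def scalar_prod_def atLeast0LessThan lessThan_Suc_atMost)
  qed
  obtain u and W :: "real^'d::{finite,linorder}"
    where uW: "\<forall>r\<le>CARD('d). affine_coeffs u W r = x r"
    using ex_affine_coeffs by blast
  show thesis
  proof
    show "\<forall>j\<in>I. h j = u + inner W (a j)"
    proof
      fix j assume "j \<in> I"
      then obtain c where "c < card I" "?L ! c = j"
        using bij_betw_nth_sorted_list_of_set[OF assms(2)]
        by (metis bij_betw_iff_bijections lessThan_iff)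
      then show "h j = u + inner W (a j)"
        using solves[of c] assms(3) uW by (simp add: sum_Amat_affine_coeffs[symmetric])
    qed
  qed
qed

lemma dIi_cofactor_expansion:
  fixes a :: "nat \<Rightarrow> real^'d::{finite,linorder}"
  shows "dIi a I i h = (\<Sum>c<CARD('d) + 2. h ((sorted_list_of_set I @ [i]) ! c)
            * cofactor (lifted_simplex_mat a I i (\<lambda>_. 0)) (CARD('d) + 1) c)"
proof -
  have cofactor_indep: "cofactor (lifted_simplex_mat a I i h) (CARD('d) + 1) c
      = cofactor (lifted_simplex_mat a I i (\<lambda>_. 0)) (CARD('d) + 1) c" for c
    unfolding cofactor_def
    by (rule arg_cong[where f = "\<lambda>M. (- 1) ^ (CARD('d) + 1 + c) * Determinant.det M"],
        rule eq_matI)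
      (auto simp: mat_delete_def lifted_simplex_mat_def Ahmat_def)
  have "dIi a I i h = (\<Sum>c<CARD('d) + 2. lifted_simplex_mat a I i h $$ (CARD('d) + 1, c)
            * cofactor (lifted_simplex_mat a I i h) (CARD('d) + 1) c)"
    unfolding dIi_eq_det by (rule laplace_expansion_row[OF lifted_simplex_mat_carrier]) simp
  also have "\<dots> = (\<Sum>c<CARD('d) + 2. h ((sorted_list_of_set I @ [i]) ! c)
            * cofactor (lifted_simplex_mat a I i (\<lambda>_. 0)) (CARD('d) + 1) c)"
    by (rule sum.cong[OF refl], subst cofactor_indep) (simp add: lifted_simplex_mat_def Ahmat_def)
  finally show ?thesis .
qed

lemma cofactor_lifted_simplex_mat_last:
  fixes a :: "nat \<Rightarrow> real^'d::{finite,linorder}"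
  assumes "card I = CARD('d) + 1"
  shows "cofactor (lifted_simplex_mat a I i h) (CARD('d) + 1) (CARD('d) + 1) = dI a I"
proof -
  have "mat_delete (lifted_simplex_mat a I i h) (CARD('d) + 1) (CARD('d) + 1) = simplex_mat a I"
    by (rule eq_matI)
      (auto simp: mat_delete_def lifted_simplex_mat_def simplex_mat_def Ahmat_def nth_append assms)
  then show ?thesis
    unfolding cofactor_def dI_eq_det by simp
qed

lemma Rn_linear_form_unique:
  assumes "m \<in> Rn n" "m' \<in> Rn n" "\<forall>h. (\<Sum>j<n. m j * h j) = (\<Sum>j<n. m' j * h j)"
  shows "m = m'"
proof
  fix j
  show "m j = m' j"
  proof (cases "j < n")
    case True
    then show ?thesis
      using assms(3)[rule_format, of "\<lambda>k. if k = j then 1 else 0"]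
      by (simp add: if_distrib cong: if_cong)
  next
    case False
    with assms(1,2) show ?thesis by (simp add: Rn_def)
  qed
qed

lemma ex_Rn_linear_form:
  assumes "\<forall>c<k. L c < n"
  shows "\<exists>m\<in>Rn n. \<forall>h. (\<Sum>c<k. h (L c) * C c) = (\<Sum>j<n. m j * h j)"
proof
  let ?m = "\<lambda>j. if j < n then (\<Sum>c<k. if L c = j then C c else 0) else 0"
  show "?m \<in> Rn n" by (simp add: Rn_def)
  show "\<forall>h. (\<Sum>c<k. h (L c) * C c) = (\<Sum>j<n. ?m j * h j)"
  proof
    fix h
    have "(\<Sum>j<n. ?m j * h j) = (\<Sum>j<n. \<Sum>c<k. if L c = j then C c * h j else 0)"
      by (rule sum.cong[OF refl]) (auto simp: sum_distrib_right intro!: sum.cong)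
    also have "\<dots> = (\<Sum>c<k. \<Sum>j<n. if L c = j then C c * h j else 0)"
      by (rule sum.swap)
    also have "\<dots> = (\<Sum>c<k. h (L c) * C c)"
      using assms by (simp add: sum.delta' mult.commute)
    finally show "(\<Sum>c<k. h (L c) * C c) = (\<Sum>j<n. ?m j * h j)" ..
  qed
qed

lemma mIi_in_Rn_and_dIi_eq_sum:
  fixes a :: "nat \<Rightarrow> real^'d::{finite,linorder}"
  assumes "I \<subseteq> {..<n}" "card I = CARD('d) + 1" "i < n"
  shows "mIi n a I i \<in> Rn n \<and> (\<forall>h. dIi a I i h = (\<Sum>j<n. mIi n a I i j * h j))"
proof -
  let ?L = "sorted_list_of_set I @ [i]"
  have "?L ! c < n" if "c < CARD('d) + 2" for c
  proof (cases "c < card I")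
    case True
    then have "sorted_list_of_set I ! c \<in> I"
      using bij_betw_nth_sorted_list_of_set[OF finite_subset[OF assms(1)]] by (simp add: bij_betwE)
    with True assms(1) show ?thesis by (auto simp: nth_append)
  next
    case False
    with that assms(2,3) show ?thesis by (simp add: nth_append)
  qed
  then obtain m where m: "m \<in> Rn n" "\<forall>h. (\<Sum>c<CARD('d) + 2. h (?L ! c)
      * cofactor (lifted_simplex_mat a I i (\<lambda>_. 0)) (CARD('d) + 1) c) = (\<Sum>j<n. m j * h j)"
    using ex_Rn_linear_form by blast
  have "\<exists>!m. m \<in> Rn n \<and> (\<forall>h. dIi a I i h = (\<Sum>j<n. m j * h j))"
  proof (rule ex1I[of _ m])
    show "m \<in> Rn n \<and> (\<forall>h. dIi a I i h = (\<Sum>j<n. m j * h j))"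
      using m by (simp add: dIi_cofactor_expansion)
  next
    fix m' assume "m' \<in> Rn n \<and> (\<forall>h. dIi a I i h = (\<Sum>j<n. m' j * h j))"
    with m show "m' = m"
      by (intro Rn_linear_form_unique) (auto simp: dIi_cofactor_expansion)
  qed
  then show ?thesis
    unfolding mIi_def by (rule theI')
qed

lemma dIi_eq_sum_mIi:
  fixes a :: "nat \<Rightarrow> real^'d::{finite,linorder}"
  assumes "I \<subseteq> {..<n}" "card I = CARD('d) + 1" "i < n"
  shows "dIi a I i h = (\<Sum>j<n. mIi n a I i j * h j)"
  using mIi_in_Rn_and_dIi_eq_sum[OF assms] by blast

lemma dIi_indicator_outside:
  fixes a :: "nat \<Rightarrow> real^'d::{finite,linorder}"
  assumes "finite I" "card I = CARD('d) + 1" "i \<notin> I" "j \<notin> I"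
  shows "dIi a I i (\<lambda>k. if k = j then 1 else 0) = (if j = i then dI a I else 0)"
proof -
  let ?L = "sorted_list_of_set I @ [i]"
  let ?C = "cofactor (lifted_simplex_mat a I i (\<lambda>_. 0)) (CARD('d) + 1)"
  have "?L ! c \<noteq> j" if "c < CARD('d) + 1" for c
    using bij_betwE[OF bij_betw_nth_sorted_list_of_set[OF assms(1)]] that assms(2,4)
    by (auto simp: nth_append)
  then have "dIi a I i (\<lambda>k. if k = j then 1 else 0) = (if i = j then ?C (CARD('d) + 1) else 0)"
    using assms(2) by (simp add: dIi_cofactor_expansion nth_append)
  then show ?thesis
    using cofactor_lifted_simplex_mat_last[OF assms(2)] by auto
qed

lemma mIi_outside_simplex:
  fixes a :: "nat \<Rightarrow> real^'d::{finite,linorder}"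
  assumes "I \<subseteq> {..<n}" "card I = CARD('d) + 1" "i \<in> {..<n} - I" "j \<notin> I"
  shows "mIi n a I i j = (if j = i then dI a I else 0)"
proof (cases "j < n")
  case True
  have "mIi n a I i j = dIi a I i (\<lambda>k. if k = j then 1 else 0)"
    using dIi_eq_sum_mIi[OF assms(1,2), of i a] assms(3) True
    by (simp add: if_distrib cong: if_cong)
  then show ?thesis
    using dIi_indicator_outside[OF finite_subset[OF assms(1)] assms(2)] assms(3,4) by simp
next
  case False
  then show ?thesis
    using mIi_in_Rn_and_dIi_eq_sum[OF assms(1,2), of i a] assms(3) by (auto simp: Rn_def)
qed

lemma dIi_Amat_row_eq_0:
  fixes a :: "nat \<Rightarrow> real^'d::{finite,linorder}"
  assumes "r \<le> CARD('d)"
  shows "dIi a I i (Amat a r) = 0"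
  unfolding dIi_eq_det
proof (rule det_identical_rows[OF lifted_simplex_mat_carrier, of r "CARD('d) + 1"])
  show "Matrix.row (lifted_simplex_mat a I i (Amat a r)) r
      = Matrix.row (lifted_simplex_mat a I i (Amat a r)) (CARD('d) + 1)"
    using assms by (auto simp: lifted_simplex_mat_def Ahmat_def)
qed (use assms in auto)

lemma sum_Amat_mIi_eq_0:
  fixes a :: "nat \<Rightarrow> real^'d::{finite,linorder}"
  assumes "I \<subseteq> {..<n}" "card I = CARD('d) + 1" "i < n" "r \<le> CARD('d)"
  shows "(\<Sum>j<n. Amat a r j * mIi n a I i j) = 0"
  using dIi_eq_sum_mIi[OF assms(1-3), of a "Amat a r"] dIi_Amat_row_eq_0[OF assms(4)]
  by (simp add: mult.commute)

lemma dIi_eq_dI_mult_gap: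
  fixes a :: "nat \<Rightarrow> real^'d::{finite,linorder}"
  assumes "I \<subseteq> {..<n}" "card I = CARD('d) + 1" "i \<in> {..<n} - I"
    and "\<forall>j\<in>I. h j = u + inner W (a j)"
  shows "dIi a I i h = dI a I * (h i - (u + inner W (a i)))"
proof -
  let ?m = "mIi n a I i"
  let ?g = "\<lambda>j. u + inner W (a j)"
  have "dIi a I i h = (\<Sum>j<n. ?m j * (h j - ?g j)) + (\<Sum>j<n. ?m j * ?g j)"
    using dIi_eq_sum_mIi[OF assms(1,2), of i a h] assms(3)
    by (simp add: sum.distrib[symmetric] algebra_simps)
  also have "(\<Sum>j<n. ?m j * ?g j) = 0"
    using sum_Amat_mIi_eq_0[OF assms(1,2)] assms(3) by (intro sum_kernel_mult_affine) simp
  also have "(\<Sum>j<n. ?m j * (h j - ?g j)) = (\<Sum>j<n. if j = i then dI a I * (h i - ?g i) else 0)"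
    using assms(4) by (intro sum.cong) (auto simp: mIi_outside_simplex[OF assms(1-3)])
  finally show ?thesis
    using assms(3) by simp
qed

lemma inj_on_image_setcompr_iff:
  assumes "inj_on a {..<n}" "I \<subseteq> {..<n}" "a ` I = {a j |j. j < n \<and> P j}" "j < n"
  shows "P j \<longleftrightarrow> j \<in> I"
proof
  assume "P j"
  with assms(3,4) obtain j' where "j' \<in> I" "a j = a j'" by blast
  with assms(1,2,4) show "j \<in> I" by (metis inj_onD lessThan_iff subsetD)
next
  assume "j \<in> I"
  with assms(3) obtain j' where "j' < n" "P j'" "a j = a j'" by blast
  with assms(1,4) show "P j" by (metis inj_onD lessThan_iff)
qed

lemma regular_subdivision_cellD:
  fixes a :: "nat \<Rightarrow> real^'d"
  assumes inj: "inj_on a {..<n}" and I: "I \<subseteq> {..<n}" "I \<noteq> {}"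
    and cell: "a ` I \<in> regular_subdivision n a h"
  obtains u W where "\<forall>j\<in>I. h j = u + inner W (a j)" "\<forall>j\<in>{..<n} - I. u + inner W (a j) < h j"
proof -
  define P where "P = convex hull (lifted n a h)"
  obtain F where "lower_face P F" and cellF: "a ` I = {a j |j. j < n \<and> (a j, h j) \<in> F}"
    using cell unfolding regular_subdivision_def mem_Collect_eq P_def[symmetric] by blast
  then obtain w t where t: "t > 0" and F: "F = {p \<in> P. \<forall>q\<in>P. inner (w, t) p \<le> inner (w, t) q}"
    unfolding lower_face_def by blast
  define \<psi> where "\<psi> j = inner (w, t) (a j, h j)" for j
  have inP: "(a j, h j) \<in> P" if "j < n" for j
    unfolding P_def lifted_def by (rule hull_inc) (use that in blast)
  have minimal: "(\<forall>q\<in>P. \<psi> j \<le> inner (w, t) q) \<longleftrightarrow> j \<in> I" if "j < n" for j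
    using inj_on_image_setcompr_iff[OF inj I(1) cellF that] inP[OF that] by (simp add: F \<psi>_def)
  obtain i0 where i0: "i0 \<in> I" "i0 < n" using I by blast
  have le: "\<psi> j \<le> \<psi> k" if "j \<in> I" "k < n" for j k
    using minimal[of j] inP[OF that(2)] that I(1) unfolding \<psi>_def by blast
  have on_I: "\<psi> j = \<psi> i0" if "j \<in> I" for j
    using le[OF that i0(2)] le[OF i0(1)] that I(1) by (meson antisym lessThan_iff subsetD)
  have off_I: "\<psi> i0 < \<psi> j" if j: "j < n" "j \<notin> I" for j
  proof -
    obtain q where "q \<in> P" "inner (w, t) q < \<psi> j"
      using minimal[OF j(1)] j(2) by (auto simp: not_le)
    moreover have "\<psi> i0 \<le> inner (w, t) q"
      using minimal[OF i0(2)] i0(1) \<open>q \<in> P\<close> by blast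
    ultimately show ?thesis by linarith
  qed
  have h_eq: "h j = \<psi> j / t + inner (- (1 / t) *\<^sub>R w) (a j)" for j
    using t by (simp add: \<psi>_def field_simps)
  show thesis
  proof
    show "\<forall>j\<in>I. h j = \<psi> i0 / t + inner (- (1 / t) *\<^sub>R w) (a j)"
      using h_eq on_I by simp
    show "\<forall>j\<in>{..<n} - I. \<psi> i0 / t + inner (- (1 / t) *\<^sub>R w) (a j) < h j"
      using h_eq off_I t by (simp add: divide_strict_right_mono)
  qed
qed

lemma regular_subdivision_cellI:
  fixes a :: "nat \<Rightarrow> real^'d"
  assumes I: "I \<subseteq> {..<n}" "I \<noteq> {}"
    and on_I: "\<forall>j\<in>I. h j = u + inner W (a j)"
    and off_I: "\<forall>j\<in>{..<n} - I. u + inner W (a j) < h j"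
  shows "a ` I \<in> regular_subdivision n a h"
proof -
  define P where "P = convex hull (lifted n a h)"
  define F where "F = P \<inter> {q. inner (- W, 1) q = u}"
  have lift: "inner (- W, 1) (a j, h j) = h j - inner W (a j)" for j
    by simp
  have inP: "(a j, h j) \<in> P" if "j < n" for j
    unfolding P_def lifted_def by (rule hull_inc) (use that in blast)
  have in_F: "(a j, h j) \<in> F \<longleftrightarrow> j \<in> I" if "j < n" for j
  proof -
    have "(a j, h j) \<in> F \<longleftrightarrow> h j - inner W (a j) = u"
      using inP[OF that] by (simp add: F_def lift)
    also have "\<dots> \<longleftrightarrow> j \<in> I"
      using on_I off_I[rule_format, of j] that by (cases "j \<in> I") auto
    finally show ?thesis .
  qed
  have "lifted n a h \<subseteq> {q. u \<le> inner (- W, 1) q}"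
    using on_I off_I by (force simp: lifted_def lift)
  then have "P \<subseteq> {q. u \<le> inner (- W, 1) q}"
    unfolding P_def by (rule hull_minimal) (rule convex_halfspace_ge)
  then have above: "\<forall>q\<in>P. u \<le> inner (- W, 1) q"
    by blast
  obtain i0 where i0: "i0 \<in> I" "i0 < n" using I by blast
  have "F face_of P"
    unfolding F_def P_def
    by (rule face_of_Int_supporting_hyperplane_ge[OF convex_convex_hull]) (use above P_def in auto)
  moreover have "F = {p \<in> P. \<forall>q\<in>P. inner (- W, 1) p \<le> inner (- W, 1) q}"
  proof (rule Set.set_eqI, rule iffI)
    fix p assume "p \<in> F"
    then show "p \<in> {p \<in> P. \<forall>q\<in>P. inner (- W, 1) p \<le> inner (- W, 1) q}"
      using above by (simp add: F_def)
  next
    fix p assume p: "p \<in> {p \<in> P. \<forall>q\<in>P. inner (- W, 1) p \<le> inner (- W, 1) q}"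
    have "inner (- W, 1) (a i0, h i0) = u"
      using on_I i0(1) by simp
    then show "p \<in> F"
      using p above inP[OF i0(2)] by (force simp: F_def)
  qed
  ultimately have "lower_face P F"
    unfolding lower_face_def by (intro conjI exI[of _ "- W"] exI[of _ "1::real"]) auto
  moreover have "a ` I = {a j |j. j < n \<and> (a j, h j) \<in> F}"
    using I(1) in_F by blast
  ultimately show ?thesis
    unfolding regular_subdivision_def mem_Collect_eq P_def[symmetric] by blast
qed

lemma regular_subdivision_simplex_cell_iff:
  fixes a :: "nat \<Rightarrow> real^'d::{finite,linorder}"
  assumes inj: "inj_on a {..<n}" and I: "I \<subseteq> {..<n}" "card I = CARD('d) + 1"
    and D: "dI a I \<noteq> 0"
  shows "a ` I \<in> regular_subdivision n a h \<longleftrightarrow> (\<forall>i\<in>{..<n} - I. dI a I * dIi a I i h > 0)"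
proof -
  have fin: "finite I" and ne: "I \<noteq> {}"
    using I finite_subset by auto
  have gap: "dI a I * dIi a I i h = (dI a I * dI a I) * (h i - (u + inner W (a i)))"
    if "\<forall>j\<in>I. h j = u + inner W (a j)" "i \<in> {..<n} - I" for u W i
    using dIi_eq_dI_mult_gap[OF I that(2) that(1)] by simp
  have DD: "dI a I * dI a I > 0"
    using D not_real_square_gt_zero by blast
  show ?thesis
  proof
    assume "a ` I \<in> regular_subdivision n a h"
    then obtain u W where on_I: "\<forall>j\<in>I. h j = u + inner W (a j)"
      and off_I: "\<forall>j\<in>{..<n} - I. u + inner W (a j) < h j"
      using regular_subdivision_cellD[OF inj I(1) ne] by blast
    show "\<forall>i\<in>{..<n} - I. dI a I * dIi a I i h > 0"
    proof
      fix i assume i: "i \<in> {..<n} - I"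
      show "dI a I * dIi a I i h > 0"
        unfolding gap[OF on_I i] using DD off_I i by simp
    qed
  next
    assume pos: "\<forall>i\<in>{..<n} - I. dI a I * dIi a I i h > 0"
    obtain u W where on_I: "\<forall>j\<in>I. h j = u + inner W (a j)"
      using simplex_affine_interpolation[OF D fin I(2)] by blast
    have "\<forall>j\<in>{..<n} - I. u + inner W (a j) < h j"
      using pos gap[OF on_I] DD by (simp add: zero_less_mult_iff)
    with on_I show "a ` I \<in> regular_subdivision n a h"
      by (rule regular_subdivision_cellI[OF I(1) ne])
  qed
qed

lemma sum_dI_mIi_outside_simplex:
  fixes a :: "nat \<Rightarrow> real^'d::{finite,linorder}"
  assumes "I \<subseteq> {..<n}" "card I = CARD('d) + 1" "j \<in> {..<n} - I"
  shows "(\<Sum>i\<in>{..<n} - I. c i * (dI a I * mIi n a I i j)) = c j * (dI a I * dI a I)"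
proof -
  have "(\<Sum>i\<in>{..<n} - I. c i * (dI a I * mIi n a I i j))
      = (\<Sum>i\<in>{..<n} - I. if i = j then c j * (dI a I * dI a I) else 0)"
    using assms(3) by (intro sum.cong) (auto simp: mIi_outside_simplex[OF assms(1,2)])
  then show ?thesis
    using assms(3) by simp
qed

lemma dI_mIi_linear_independent:
  fixes a :: "nat \<Rightarrow> real^'d::{finite,linorder}"
  assumes "I \<subseteq> {..<n}" "card I = CARD('d) + 1" "dI a I \<noteq> 0"
    and "\<forall>j<n. (\<Sum>i\<in>{..<n} - I. c i * (dI a I * mIi n a I i j)) = 0"
  shows "\<forall>i\<in>{..<n} - I. c i = 0"
  using assms sum_dI_mIi_outside_simplex[OF assms(1,2)] by auto

lemma dI_mIi_span_kernel:
  fixes a :: "nat \<Rightarrow> real^'d::{finite,linorder}"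
  assumes I: "I \<subseteq> {..<n}" "card I = CARD('d) + 1" and D: "dI a I \<noteq> 0"
    and x: "\<forall>r\<le>CARD('d). (\<Sum>j<n. Amat a r j * x j) = 0"
  shows "\<exists>c. \<forall>j<n. x j = (\<Sum>i\<in>{..<n} - I. c i * (dI a I * mIi n a I i j))"
proof
  define c where "c i = x i / (dI a I * dI a I)" for i
  define y where "y j = x j - (\<Sum>i\<in>{..<n} - I. c i * (dI a I * mIi n a I i j))" for j
  have y_outside: "y j = 0" if "j \<in> {..<n} - I" for j
    unfolding y_def sum_dI_mIi_outside_simplex[OF I that] using D by (simp add: c_def)
  have "(\<Sum>j\<in>I. Amat a r j * y j) = 0" if r: "r \<le> CARD('d)" for r
  proof -
    have "(\<Sum>j\<in>I. Amat a r j * y j) = (\<Sum>j<n. Amat a r j * y j)"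
      using I(1) y_outside by (intro sum.mono_neutral_left) auto
    also have "\<dots> = (\<Sum>j<n. Amat a r j * x j)
        - (\<Sum>i\<in>{..<n} - I. c i * dI a I * (\<Sum>j<n. Amat a r j * mIi n a I i j))"
      by (simp add: y_def right_diff_distrib sum_subtractf sum_distrib_left sum.swap[of _ "{..<n}"]
          mult_ac)
    also have "\<dots> = 0"
      using x r sum_Amat_mIi_eq_0[OF I] by simp
    finally show ?thesis .
  qed
  then have "y j = 0" if "j \<in> I" for j
    using simplex_columns_independent[OF D finite_subset[OF I(1)] I(2)] that by blast
  with y_outside show "\<forall>j<n. x j = (\<Sum>i\<in>{..<n} - I. c i * (dI a I * mIi n a I i j))"
    by (metis DiffI diff_eq_eq lessThan_iff y_def add_0)
qed

theorem lemma2p1: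
  fixes n :: nat and a :: "nat \<Rightarrow> real^'d::{finite,linorder}" and I :: "nat set"
  assumes integral: "\<forall>j<n. \<forall>k. a j $ k \<in> \<int>"
    and distinct: "inj_on a {..<n}"
    and n_ge: "n \<ge> CARD('d) + 2"
    and fulldim: "aff_dim (a ` {..<n}) = int CARD('d)"
    and I_sub: "I \<subseteq> {..<n}"
    and I_card: "card I = CARD('d) + 1"
    and I_simplex: "\<not> affine_dependent (a ` I)"
  shows "{h \<in> Rn n. a ` I \<in> regular_subdivision n a h} =
           {h \<in> Rn n. \<forall>i \<in> {..<n} - I.
               (\<Sum>j<n. (dI a I * mIi n a I i j) * h j) = dI a I * dIi a I i h
             \<and> dI a I * dIi a I i h > 0}
         \<and> (\<forall>i \<in> {..<n} - I. (\<lambda>j. dI a I * mIi n a I i j) \<in> Rn n \<and>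
            (\<forall>r \<le> CARD('d). (\<Sum>j<n. Amat a r j * (dI a I * mIi n a I i j)) = 0))
         \<and> (\<forall>c. (\<forall>j<n. (\<Sum>i \<in> {..<n} - I. c i * (dI a I * mIi n a I i j)) = 0)
                  \<longrightarrow> (\<forall>i \<in> {..<n} - I. c i = 0))
         \<and> (\<forall>x \<in> Rn n. (\<forall>r \<le> CARD('d). (\<Sum>j<n. Amat a r j * x j) = 0) \<longrightarrow>
              (\<exists>c. \<forall>j<n. x j = (\<Sum>i \<in> {..<n} - I. c i * (dI a I * mIi n a I i j))))"
proof -
  have fin: "finite I"
    using I_sub finite_subset by blast
  have D: "dI a I \<noteq> 0"
    using dI_nonzero[OF fin I_card inj_on_subset[OF distinct I_sub] I_simplex] .
  have mIi: "mIi n a I i \<in> Rn n" "dIi a I i h = (\<Sum>j<n. mIi n a I i j * h j)"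
    if "i \<in> {..<n} - I" for i h
    using mIi_in_Rn_and_dIi_eq_sum[OF I_sub I_card, of i a] that by auto
  have "(\<Sum>j<n. (dI a I * mIi n a I i j) * h j) = dI a I * dIi a I i h"
    if "i \<in> {..<n} - I" for i h
    using mIi(2)[OF that] by (simp add: sum_distrib_left mult.assoc)
  moreover have "(\<lambda>j. dI a I * mIi n a I i j) \<in> Rn n" if "i \<in> {..<n} - I" for i
    using mIi(1)[OF that] by (simp add: Rn_def)
  moreover have "(\<Sum>j<n. Amat a r j * (dI a I * mIi n a I i j)) = 0"
    if "i \<in> {..<n} - I" "r \<le> CARD('d)" for i r
    using sum_Amat_mIi_eq_0[OF I_sub I_card, of i r a] that
    by (simp add: sum_distrib_left[symmetric] mult.left_commute)
  ultimately show ?thesis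
    using regular_subdivision_simplex_cell_iff[OF distinct I_sub I_card D]
      dI_mIi_linear_independent[OF I_sub I_card D] dI_mIi_span_kernel[OF I_sub I_card D]
    by auto
qed

end
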